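(* With $F_n$ as defined in the context, $$\int_0^{1+\frac{(\log n)^2}{n}}F_n(w)\,dw=O(n\log\log n)\qquad(n\to\infty).$$
   Context: For $w>0$ and integer $n\ge1$ let $a_n(w)=\sum_{j=0}^n w^j$, $b_n(w)=\sum_{j=1}^n jw^j$, $c_n(w)=\sum_{j=0}^n j^2w^j$, and $$F_n(w)=\frac{1}{2\sqrt{w}}\sqrt{\frac{c_n(w)}{a_n(w)}}\sqrt{\frac{a_n(w)c_n(w)-b_n(w)^2}{w\,a_n(w)^2}}.$$ (For the harmonic Kac ensemble with $m=n$, $\int_a^bF_n(w)\,dw$ equals the expected number of zeros in $\{a<|z|^2<b\}$.) $\log$ is the natural logarithm. *)

theory Defs
  imports "HOL-Analysis.Analysis" "HOL-Library.Landau_Symbols"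
begin

definition a_n :: "nat \<Rightarrow> real \<Rightarrow> real" where
  "a_n n w = (\<Sum>j=0..n. w ^ j)"

definition b_n :: "nat \<Rightarrow> real \<Rightarrow> real" where
  "b_n n w = (\<Sum>j=1..n. real j * w ^ j)"

definition c_n :: "nat \<Rightarrow> real \<Rightarrow> real" where
  "c_n n w = (\<Sum>j=0..n. (real j)^2 * w ^ j)"

definition F_n :: "nat \<Rightarrow> real \<Rightarrow> real" where
  "F_n n w = 1 / (2 * sqrt w) * sqrt (c_n n w / a_n n w)
      * sqrt ((a_n n w * c_n n w - (b_n n w)^2) / (w * (a_n n w)^2))"

end

theory Submission
  imports Defs "HOL-Real_Asymp.Real_Asymp"
begin

text \<open>
  Write \<open>F_n n w = sqrt X * sqrt Y / 2\<close> with \<open>X = c/(w a)\<close> and \<open>Y = (a c - b\<^sup>2)/(w a\<^sup>2)\<close>.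
  By Cauchy--Schwarz \<open>0 \<le> Y \<le> X\<close>, so \<open>F_n \<le> X/2\<close>. Always \<open>X \<le> n\<^sup>2\<close>, and an exact
  formula for \<open>(1 - w)\<^sup>2 c\<close> gives \<open>X \<le> 2/(1 - w)\<^sup>2\<close> for \<open>w < 1\<close>. For \<open>w > 1\<close> the
  substitution \<open>j \<mapsto> n - j\<close> relates the moments at \<open>w\<close> and \<open>1/w\<close>, which yields
  \<open>Y \<le> 2/(w - 1)\<^sup>2\<close> and hence \<open>F_n \<le> n/(w - 1)\<close>.
  Integrating these three bounds over \<open>[0, 1 - 1/n]\<close>, \<open>[1 - 1/n, 1 + 1/n]\<close> and
  \<open>[1 + 1/n, 1 + (log n)\<^sup>2/n]\<close> gives at most \<open>n\<close>, \<open>n\<close> and \<open>n log ((log n)\<^sup>2) = 2 n log log n\<close>.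
\<close>

lemma b_n_eq_sum_from_0: "b_n n w = (\<Sum>j=0..n. real j * w ^ j)"
  unfolding b_n_def by (simp add: sum.atLeast_Suc_atMost[of 0 n])

lemma a_n_ge_1: "w \<ge> 0 \<Longrightarrow> a_n n w \<ge> 1"
  unfolding a_n_def using member_le_sum[of 0 "{0..n}" "\<lambda>j. w ^ j"] by simp

lemma c_n_nonneg: "w \<ge> 0 \<Longrightarrow> c_n n w \<ge> 0"
  unfolding c_n_def by (intro sum_nonneg) auto

lemma b_n_sq_le_a_n_c_n:
  assumes "w \<ge> 0"
  shows "(b_n n w)\<^sup>2 \<le> a_n n w * c_n n w"
proof -
  have "(\<Sum>j=0..n. sqrt (w ^ j) * (real j * sqrt (w ^ j)))\<^sup>2
      \<le> (\<Sum>j=0..n. (sqrt (w ^ j))\<^sup>2) * (\<Sum>j=0..n. (real j * sqrt (w ^ j))\<^sup>2)"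
    by (rule Cauchy_Schwarz_ineq_sum)
  then show ?thesis
    using assms by (simp add: b_n_eq_sum_from_0 a_n_def c_n_def power_mult_distrib algebra_simps)
qed

lemma c_n_le_a_n: "w \<ge> 0 \<Longrightarrow> c_n n w \<le> (real n)\<^sup>2 * w * a_n n w"
proof (cases n)
  case 0
  then show ?thesis by (simp add: c_n_def)
next
  case (Suc m)
  assume w: "w \<ge> 0"
  have "c_n n w = (\<Sum>i=0..m. (real (Suc i))\<^sup>2 * w ^ Suc i)"
    unfolding c_n_def Suc by (subst sum.atLeast0_atMost_Suc_shift) simp
  also have "\<dots> \<le> (\<Sum>i=0..m. (real n)\<^sup>2 * w * w ^ i)"
  proof (intro sum_mono)
    fix i assume "i \<in> {0..m}"
    then have "(real (Suc i))\<^sup>2 \<le> (real n)\<^sup>2" using Suc by (intro power_mono) auto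
    then show "(real (Suc i))\<^sup>2 * w ^ Suc i \<le> (real n)\<^sup>2 * w * w ^ i"
      using w by (simp add: mult_right_mono mult.assoc)
  qed
  also have "\<dots> = (real n)\<^sup>2 * w * a_n m w"
    unfolding a_n_def by (simp add: sum_distrib_left)
  also have "\<dots> \<le> (real n)\<^sup>2 * w * a_n n w"
    unfolding a_n_def Suc using w by (intro mult_left_mono) (auto simp: sum.atLeast0_atMost_Suc)
  finally show ?thesis .
qed

lemma c_n_closed_form:
  "(1 - w)\<^sup>2 * c_n n w = 2 * w * a_n n w - w - (real n + 1)\<^sup>2 * w ^ (n + 1) + (real n)\<^sup>2 * w ^ (n + 2)"
proof (induction n)
  case 0
  then show ?case by (simp add: a_n_def c_n_def)
next
  case (Suc n)
  have "(1 - w)\<^sup>2 * c_n (Suc n) w = (1 - w)\<^sup>2 * c_n n w + (1 - w)\<^sup>2 * (real n + 1)\<^sup>2 * w ^ Suc n"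
    unfolding c_n_def by (simp add: sum.atLeast0_atMost_Suc algebra_simps)
  with Suc.IH show ?case
    unfolding a_n_def by (simp add: sum.atLeast0_atMost_Suc power2_eq_square algebra_simps)
qed

lemma c_n_le_below_one:
  assumes "0 \<le> w" "w \<le> 1"
  shows "(1 - w)\<^sup>2 * c_n n w \<le> 2 * w * a_n n w"
proof -
  have "(real n)\<^sup>2 * w ^ (n + 2) \<le> (real n + 1)\<^sup>2 * w ^ (n + 1)"
    using assms by (intro mult_mono power_mono power_decreasing) auto
  then show ?thesis unfolding c_n_closed_form using assms by linarith
qed

lemma power_diff_eq_power_inverse: "(w::real) \<noteq> 0 \<Longrightarrow> i \<le> n \<Longrightarrow> w ^ (n - i) = w ^ n * (1 / w) ^ i"
  by (simp add: power_diff power_one_over)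

lemma a_n_reflect:
  assumes "w \<noteq> 0"
  shows "a_n n w = w ^ n * a_n n (1 / w)"
proof -
  have "a_n n w = (\<Sum>i=0..n. w ^ (n - i))"
    unfolding a_n_def by (subst sum.atLeastAtMost_rev) simp
  also have "\<dots> = (\<Sum>i=0..n. w ^ n * (1 / w) ^ i)"
    using assms by (intro sum.cong refl) (simp add: power_diff_eq_power_inverse)
  finally show ?thesis unfolding a_n_def by (simp add: sum_distrib_left)
qed

lemma b_n_reflect:
  assumes "w \<noteq> 0"
  shows "b_n n w = w ^ n * (real n * a_n n (1 / w) - b_n n (1 / w))"
proof -
  have "b_n n w = (\<Sum>i=0..n. real (n - i) * w ^ (n - i))"
    unfolding b_n_eq_sum_from_0 by (subst sum.atLeastAtMost_rev) simp
  also have "\<dots> = (\<Sum>i=0..n. w ^ n * (real n * (1 / w) ^ i) - w ^ n * (real i * (1 / w) ^ i))"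
    using assms by (intro sum.cong refl) (simp add: power_diff_eq_power_inverse of_nat_diff algebra_simps)
  finally show ?thesis unfolding a_n_def b_n_eq_sum_from_0
    by (simp add: sum_distrib_left sum_subtractf right_diff_distrib)
qed

lemma c_n_reflect:
  assumes "w \<noteq> 0"
  shows "c_n n w = w ^ n * ((real n)\<^sup>2 * a_n n (1 / w) - 2 * real n * b_n n (1 / w) + c_n n (1 / w))"
proof -
  have "c_n n w = (\<Sum>i=0..n. (real (n - i))\<^sup>2 * w ^ (n - i))"
    unfolding c_n_def by (subst sum.atLeastAtMost_rev) simp
  also have "\<dots> = (\<Sum>i=0..n. w ^ n * ((real n)\<^sup>2 * (1 / w) ^ i)
      - w ^ n * (2 * real n * (real i * (1 / w) ^ i)) + w ^ n * ((real i)\<^sup>2 * (1 / w) ^ i))"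
    using assms
    by (intro sum.cong refl) (simp add: power_diff_eq_power_inverse of_nat_diff power2_diff algebra_simps)
  finally show ?thesis unfolding a_n_def b_n_eq_sum_from_0 c_n_def
    by (simp add: sum_distrib_left sum_subtractf sum.distrib right_diff_distrib distrib_left)
qed

lemma discriminant_reflect:
  "w \<noteq> 0 \<Longrightarrow> a_n n w * c_n n w - (b_n n w)\<^sup>2
     = w ^ (2 * n) * (a_n n (1 / w) * c_n n (1 / w) - (b_n n (1 / w))\<^sup>2)"
  by (simp add: a_n_reflect[of w] b_n_reflect[of w] c_n_reflect[of w]
      power2_eq_square power_mult algebra_simps)

lemma discriminant_ratio_le_above_one:
  assumes w: "w > 1"
  shows "(a_n n w * c_n n w - (b_n n w)\<^sup>2) / (w * (a_n n w)\<^sup>2) \<le> 2 / (w - 1)\<^sup>2"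
proof -
  define u where "u = 1 / w"
  have u: "0 < u" "u < 1" unfolding u_def using w by auto
  have A: "a_n n u \<ge> 1" using a_n_ge_1[of u n] u by simp
  have "w \<noteq> 0" using w by simp
  have "(a_n n w * c_n n w - (b_n n w)\<^sup>2) / (w * (a_n n w)\<^sup>2)
      = (w ^ n)\<^sup>2 * (a_n n u * c_n n u - (b_n n u)\<^sup>2) / ((w ^ n)\<^sup>2 * (w * (a_n n u)\<^sup>2))"
    by (subst discriminant_reflect[OF \<open>w \<noteq> 0\<close>], subst a_n_reflect[OF \<open>w \<noteq> 0\<close>])
      (simp add: u_def power_mult_distrib power_mult algebra_simps)
  also have "\<dots> = (a_n n u * c_n n u - (b_n n u)\<^sup>2) / (w * (a_n n u)\<^sup>2)"
    using w by simp
  also have "\<dots> \<le> (a_n n u * c_n n u) / (w * (a_n n u)\<^sup>2)"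
    using w A by (intro divide_right_mono) auto
  also have "\<dots> = c_n n u / (w * a_n n u)"
    using A by (simp add: power2_eq_square)
  also have "\<dots> \<le> 2 * u / (w * (1 - u)\<^sup>2)"
    using c_n_le_below_one[of u n] u A w by (simp add: divide_simps mult.commute mult.left_commute)
  also have "\<dots> = 2 / (w - 1)\<^sup>2"
  proof -
    have "w * (1 - u)\<^sup>2 = (w - 1)\<^sup>2 / w"
      unfolding u_def using w by (simp add: field_simps power2_eq_square)
    then show ?thesis unfolding u_def using w by simp
  qed
  finally show ?thesis .
qed

lemma F_n_eq_sqrt_ratios:
  assumes "w > 0"
  shows "F_n n w = sqrt (c_n n w / (w * a_n n w))
      * sqrt ((a_n n w * c_n n w - (b_n n w)\<^sup>2) / (w * (a_n n w)\<^sup>2)) / 2"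
proof -
  have "a_n n w > 0" using a_n_ge_1[of w n] assms by simp
  then have "sqrt (c_n n w / (w * a_n n w)) = sqrt (c_n n w / a_n n w) / sqrt w"
    using assms by (simp add: real_sqrt_divide real_sqrt_mult)
  then show ?thesis unfolding F_n_def by simp
qed

lemma F_n_at_0: "F_n n 0 = 0"
  unfolding F_n_def by simp

lemma F_n_bounds_by_ratio:
  assumes w: "w > 0"
  shows "0 \<le> F_n n w" and "2 * F_n n w \<le> c_n n w / (w * a_n n w)"
proof -
  define X where "X = c_n n w / (w * a_n n w)"
  define Y where "Y = (a_n n w * c_n n w - (b_n n w)\<^sup>2) / (w * (a_n n w)\<^sup>2)"
  have a: "a_n n w \<ge> 1" using a_n_ge_1[of w n] w by simp
  have Y0: "Y \<ge> 0" unfolding Y_def using b_n_sq_le_a_n_c_n[of w n] w by simp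
  have "Y \<le> (a_n n w * c_n n w) / (w * (a_n n w)\<^sup>2)"
    unfolding Y_def using w a by (intro divide_right_mono) auto
  then have YX: "Y \<le> X" unfolding X_def using a by (simp add: power2_eq_square)
  have F: "F_n n w = sqrt X * sqrt Y / 2"
    unfolding X_def Y_def using F_n_eq_sqrt_ratios[OF w] .
  show "0 \<le> F_n n w" unfolding F using Y0 YX by simp
  have "sqrt X * sqrt Y \<le> sqrt X * sqrt X" using YX Y0 by (intro mult_left_mono) auto
  then show "2 * F_n n w \<le> c_n n w / (w * a_n n w)"
    unfolding F using Y0 YX by (simp add: X_def)
qed

lemma F_n_nonneg: "w \<ge> 0 \<Longrightarrow> F_n n w \<ge> 0"
  using F_n_bounds_by_ratio(1)[of w n] by (cases "w = 0") (auto simp: F_n_at_0)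

lemma F_n_le_n_sq:
  assumes "w \<ge> 0"
  shows "F_n n w \<le> (real n)\<^sup>2 / 2"
proof (cases "w = 0")
  case False
  then have "w > 0" "a_n n w > 0" using assms a_n_ge_1[of w n] by auto
  then have "c_n n w / (w * a_n n w) \<le> (real n)\<^sup>2"
    using c_n_le_a_n[of w n] by (simp add: divide_le_eq mult.commute mult.left_commute)
  with F_n_bounds_by_ratio(2)[of w n] \<open>w > 0\<close> show ?thesis by linarith
qed (simp add: F_n_at_0)

lemma F_n_le_below_one:
  assumes "0 \<le> w" "w < 1"
  shows "F_n n w \<le> 1 / (1 - w)\<^sup>2"
proof (cases "w = 0")
  case False
  then have "w > 0" "a_n n w > 0" using assms a_n_ge_1[of w n] by auto
  then have "c_n n w / (w * a_n n w) \<le> 2 / (1 - w)\<^sup>2"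
    using c_n_le_below_one[of w n] assms
    by (simp add: divide_simps mult.commute mult.left_commute)
  with F_n_bounds_by_ratio(2)[of w n] \<open>w > 0\<close> show ?thesis by linarith
qed (simp add: F_n_at_0)

lemma F_n_le_above_one:
  assumes w: "w > 1"
  shows "F_n n w \<le> real n / (w - 1)"
proof -
  define X where "X = c_n n w / (w * a_n n w)"
  define Y where "Y = (a_n n w * c_n n w - (b_n n w)\<^sup>2) / (w * (a_n n w)\<^sup>2)"
  have "a_n n w > 0" using a_n_ge_1[of w n] w by simp
  then have "X \<le> (real n)\<^sup>2"
    unfolding X_def using c_n_le_a_n[of w n] w
    by (simp add: divide_le_eq mult.commute mult.left_commute)
  then have sX: "sqrt X \<le> real n" using real_sqrt_le_mono by fastforce
  have "sqrt Y \<le> sqrt (2 / (w - 1)\<^sup>2)"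
    unfolding Y_def using discriminant_ratio_le_above_one[OF w] by simp
  also have "\<dots> = sqrt 2 / (w - 1)" using w by (simp add: real_sqrt_divide)
  also have "\<dots> \<le> 2 / (w - 1)"
    using w sqrt2_less_2 by (intro divide_right_mono) auto
  finally have sY: "sqrt Y \<le> 2 / (w - 1)" .
  have "Y \<ge> 0" unfolding Y_def using b_n_sq_le_a_n_c_n[of w n] w by simp
  then have "sqrt X * sqrt Y \<le> real n * (2 / (w - 1))"
    using sX sY by (intro mult_mono) auto
  moreover have "F_n n w = sqrt X * sqrt Y / 2"
    unfolding X_def Y_def using F_n_eq_sqrt_ratios w by simp
  moreover have "real n * (2 / (w - 1)) = 2 * (real n / (w - 1))"
    by simp
  ultimately show ?thesis by linarith
qed

lemma continuous_on_F_n: "continuous_on {0<..} (F_n n)"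
proof -
  have "a_n n w \<noteq> 0" if "w \<in> {0<..}" for w
    using that a_n_ge_1[of w n] by simp
  then have "continuous_on {0<..} (\<lambda>w. 1 / (2 * sqrt w) * sqrt (c_n n w / a_n n w)
      * sqrt ((a_n n w * c_n n w - (b_n n w)\<^sup>2) / (w * (a_n n w)\<^sup>2)))"
    unfolding a_n_def b_n_def c_n_def by (intro continuous_intros) auto
  then show ?thesis unfolding F_n_def[abs_def] .
qed

lemma F_n_integrable:
  assumes "0 \<le> s"
  shows "F_n n integrable_on {s..t}"
proof -
  have "F_n n \<in> borel_measurable (lebesgue_on {s<..t})"
    using assms
    by (intro continuous_imp_measurable_on_sets_lebesgue continuous_on_subset[OF continuous_on_F_n]) auto
  then have "F_n n measurable_on {s<..t}"
    by (subst measurable_on_iff_borel_measurable) auto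
  then have "F_n n measurable_on {s..t}"
    by (rule measurable_on_spike_set) (rule negligible_subset[of "{s}"], auto)
  then have m: "F_n n \<in> borel_measurable (lebesgue_on {s..t})"
    by (subst measurable_on_iff_borel_measurable[symmetric]) auto
  show ?thesis
  proof (rule measurable_bounded_by_integrable_imp_integrable[OF m])
    fix x assume "x \<in> {s..t}"
    then show "norm (F_n n x) \<le> (real n)\<^sup>2 / 2"
      using assms F_n_nonneg[of x n] F_n_le_n_sq[of x n] by auto
  qed auto
qed

lemma integral_F_n_below_one_le:
  assumes "0 \<le> p" "p < 1"
  shows "integral {0..p} (F_n n) \<le> 1 / (1 - p) - 1"
proof -
  have "((\<lambda>w. 1 / (1 - w)\<^sup>2) has_integral (1 / (1 - p) - 1 / (1 - 0))) {0..p}"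
  proof (rule fundamental_theorem_of_calculus[OF assms(1)])
    fix x assume "x \<in> {0..p}"
    then have "x < 1" using assms by auto
    then have "((\<lambda>w. 1 / (1 - w)) has_real_derivative 1 / (1 - x)\<^sup>2) (at x within {0..p})"
      by (auto intro!: derivative_eq_intros simp: power2_eq_square)
    then show "((\<lambda>w. 1 / (1 - w)) has_vector_derivative 1 / (1 - x)\<^sup>2) (at x within {0..p})"
      by (simp add: has_real_derivative_iff_has_vector_derivative)
  qed
  then show ?thesis
    using assms F_n_le_below_one[of _ n]
    by (intro has_integral_le[OF integrable_integral[OF F_n_integrable]]) auto
qed

lemma integral_F_n_le_n_sq:
  assumes "0 \<le> p" "p \<le> q"
  shows "integral {p..q} (F_n n) \<le> (q - p) * (real n)\<^sup>2 / 2"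
proof -
  have "((\<lambda>w. (real n)\<^sup>2 / 2) has_integral ((q - p) * (real n)\<^sup>2 / 2)) {p..q}"
    using has_integral_const_real[of "(real n)\<^sup>2 / 2" p q] assms by simp
  then show ?thesis
    using assms F_n_le_n_sq[of _ n]
    by (intro has_integral_le[OF integrable_integral[OF F_n_integrable]]) auto
qed

lemma integral_F_n_above_one_le:
  assumes "1 < q" "q \<le> T"
  shows "integral {q..T} (F_n n) \<le> real n * (ln (T - 1) - ln (q - 1))"
proof -
  have "((\<lambda>w. real n / (w - 1)) has_integral (real n * ln (T - 1) - real n * ln (q - 1))) {q..T}"
  proof (rule fundamental_theorem_of_calculus[OF assms(2)])
    fix x assume "x \<in> {q..T}"
    then have "x > 1" using assms by auto
    then have "((\<lambda>w. real n * ln (w - 1)) has_real_derivative real n / (x - 1)) (at x within {q..T})"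
      by (auto intro!: derivative_eq_intros)
    then show "((\<lambda>w. real n * ln (w - 1)) has_vector_derivative real n / (x - 1)) (at x within {q..T})"
      by (simp add: has_real_derivative_iff_has_vector_derivative)
  qed
  then show ?thesis
    using assms F_n_le_above_one[of _ n]
    by (intro has_integral_le[OF integrable_integral[OF F_n_integrable]])
      (auto simp: right_diff_distrib)
qed

lemma integral_F_n_le:
  assumes L: "ln (real n) \<ge> 1"
  shows "integral {0..1 + (ln (real n))\<^sup>2 / real n} (F_n n) \<le> 2 * real n + 2 * real n * ln (ln (real n))"
proof -
  define N where "N = real n"
  define T where "T = 1 + (ln N)\<^sup>2 / N"
  have "real n > 0" using L by (cases "n = 0") auto
  then have N: "N > 1" unfolding N_def using L ln_le_minus_one[of "real n"] by linarith
  have L1: "ln N \<ge> 1" unfolding N_def using L by simp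
  have qT: "1 + 1 / N \<le> T"
    unfolding T_def using N L1 by (simp add: divide_right_mono one_le_power)
  have below: "integral {0..1 - 1/N} (F_n n) \<le> N - 1"
    using integral_F_n_below_one_le[of "1 - 1/N" n] N by simp
  have middle: "integral {1 - 1/N..1 + 1/N} (F_n n) \<le> N"
    using integral_F_n_le_n_sq[of "1 - 1/N" "1 + 1/N" n] N
    unfolding N_def by (simp add: power2_eq_square field_simps)
  have "ln (T - 1) - ln (1 + 1 / N - 1) = ln ((ln N)\<^sup>2)"
    unfolding T_def using N L1 by (simp add: ln_div)
  also have "\<dots> = 2 * ln (ln N)" using L1 by (simp add: ln_realpow)
  finally have above: "integral {1 + 1/N..T} (F_n n) \<le> 2 * N * ln (ln N)"
    using integral_F_n_above_one_le[OF _ qT, of n] N unfolding N_def by simp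
  have "integral {0..T} (F_n n)
      = integral {0..1 - 1/N} (F_n n) + integral {1 - 1/N..1 + 1/N} (F_n n) + integral {1 + 1/N..T} (F_n n)"
    using N qT by (simp add: Henstock_Kurzweil_Integration.integral_combine F_n_integrable)
  with below middle above show ?thesis unfolding T_def N_def by linarith
qed

theorem proposition3p1:
  "(\<forall>\<^sub>F n in sequentially. F_n n integrable_on {0..1 + (ln (real n))^2 / real n}) \<and>
   (\<lambda>n. integral {0..1 + (ln (real n))^2 / real n} (F_n n))
      \<in> O(\<lambda>n. real n * ln (ln (real n)))"
proof
  show "\<forall>\<^sub>F n in sequentially. F_n n integrable_on {0..1 + (ln (real n))^2 / real n}"
    by (simp add: F_n_integrable)
  have "\<forall>\<^sub>F n in sequentially. ln (ln (real n)) \<ge> 1" by real_asymp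
  moreover have "\<forall>\<^sub>F n in sequentially. ln (real n) \<ge> 1" by real_asymp
  ultimately have "\<forall>\<^sub>F n in sequentially. norm (integral {0..1 + (ln (real n))^2 / real n} (F_n n))
      \<le> 4 * norm (real n * ln (ln (real n)))"
  proof eventually_elim
    case (elim n)
    have "0 \<le> integral {0..1 + (ln (real n))^2 / real n} (F_n n)"
      by (intro integral_nonneg F_n_integrable F_n_nonneg) auto
    moreover have "2 * real n + 2 * real n * ln (ln (real n)) \<le> 4 * (real n * ln (ln (real n)))"
      using elim mult_left_mono[of 1 "ln (ln (real n))" "real n"] by simp
    ultimately show ?case
      using integral_F_n_le[OF elim(2)] elim by simp
  qed
  then show "(\<lambda>n. integral {0..1 + (ln (real n))^2 / real n} (F_n n)) \<in> O(\<lambda>n. real n * ln (ln (real n)))"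
    by (rule bigoI)
qed

end
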